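(* For every ideal $I\subset\mathbb{C}[\mathrm{GL}_n]$, the matrix amoeba $\mathrm{s}\mathcal{A}(I)$ is closed in $\mathbb{R}^n/\mathcal{S}_n$.
   Context: $\mathbb{C}[\mathrm{GL}_n]$ is the ring of regular functions on $\mathrm{GL}_n(\mathbb{C})$. $\mathcal{S}_n$ acts on $\mathbb{R}^n$ by permuting coordinates; $\mathbb{R}^n/\mathcal{S}_n$ carries the metric $d(x,y) = \min_{\sigma\in\mathcal{S}_n}|\sigma\cdot x - y|$. $\mathrm{sLog}:\mathrm{GL}_n(\mathbb{C})\to\mathbb{R}^n/\mathcal{S}_n$ sends $A$ to $(\ln\lambda_1,\dots,\ln\lambda_n)$ where $\lambda_1,\dots,\lambda_n$ are the singular values of $A$. $\mathrm{s}\mathcal{A}(I) = \mathrm{sLog}(V(I))$ with $V(I) = \{A\in\mathrm{GL}_n(\mathbb{C}) : f(A) = 0\ \forall f\in I\}$. *)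

theory Defs
  imports "HOL-Analysis.Analysis"
begin

text \<open>n x n complex matrices are modelled as complex^'n^'n, with 'n a finite index type
  (n = CARD('n)). GL_n = matrices with nonzero determinant.\<close>

inductive_set poly_fun :: "((complex^'n^'n) \<Rightarrow> complex) set" where
  pf_const: "(\<lambda>A. c) \<in> poly_fun"
| pf_entry: "(\<lambda>A. A $ i $ j) \<in> poly_fun"
| pf_add: "p \<in> poly_fun \<Longrightarrow> q \<in> poly_fun \<Longrightarrow> (\<lambda>A. p A + q A) \<in> poly_fun"
| pf_mult: "p \<in> poly_fun \<Longrightarrow> q \<in> poly_fun \<Longrightarrow> (\<lambda>A. p A * q A) \<in> poly_fun"

text \<open>Regular functions on GL_n: C[GL_n] = C[x_ij][1/det]. A regular function is
  represented canonically as a total function that is 0 off GL_n.\<close>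
definition regular_fun :: "((complex^'n^'n) \<Rightarrow> complex) \<Rightarrow> bool" where
  "regular_fun f \<longleftrightarrow> (\<exists>p k. p \<in> poly_fun \<and>
      f = (\<lambda>A. if det A = 0 then 0 else p A / det A ^ k))"

definition is_ideal_GL :: "((complex^'n^'n) \<Rightarrow> complex) set \<Rightarrow> bool" where
  "is_ideal_GL I \<longleftrightarrow> (\<forall>f\<in>I. regular_fun f) \<and> (\<lambda>A. 0) \<in> I \<and>
     (\<forall>f\<in>I. \<forall>g\<in>I. (\<lambda>A. f A + g A) \<in> I) \<and>
     (\<forall>f\<in>I. \<forall>g. regular_fun g \<longrightarrow> (\<lambda>A. g A * f A) \<in> I)"

definition zero_set_GL :: "((complex^'n^'n) \<Rightarrow> complex) set \<Rightarrow> (complex^'n^'n) set" where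
  "zero_set_GL I = {A. det A \<noteq> 0 \<and> (\<forall>f\<in>I. f A = 0)}"

definition conj_transpose :: "complex^'n^'n \<Rightarrow> complex^'n^'n" where
  "conj_transpose A = (\<chi> i j. cnj (A $ j $ i))"

text \<open>x is a representative of sLog A: the singular values of A (with multiplicity) are
  exp(x_i), i.e. the eigenvalues of A^* A with multiplicity are exp(x_i)^2, i.e. the
  characteristic polynomial of A^* A is prod_i (t - exp(x_i)^2).\<close>
definition sLog_rep :: "complex^'n^'n \<Rightarrow> real^'n \<Rightarrow> bool" where
  "sLog_rep A x \<longleftrightarrow> (\<forall>t::complex. det (mat t - conj_transpose A ** A) =
      (\<Prod>i\<in>UNIV. t - complex_of_real (exp (x $ i) ^ 2)))"

text \<open>Matrix amoeba sA(I), represented by its full (S_n-invariant) preimage in R^n.\<close>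
definition matrix_amoeba :: "((complex^'n^'n) \<Rightarrow> complex) set \<Rightarrow> (real^'n) set" where
  "matrix_amoeba I = {x. \<exists>A\<in>zero_set_GL I. sLog_rep A x}"

text \<open>The metric on R^n/S_n, evaluated on representatives.\<close>
definition perm_dist :: "real^'n \<Rightarrow> real^'n \<Rightarrow> real" where
  "perm_dist x y = Min {norm ((\<chi> i. x $ (\<sigma> i)) - y) | \<sigma>. \<sigma> permutes (UNIV::'n set)}"

text \<open>A set of points of R^n/S_n (given by representatives) is closed in the metric space
  (R^n/S_n, d): it contains every point at d-distance 0 from it.\<close>
definition closed_quot :: "(real^'n) set \<Rightarrow> bool" where
  "closed_quot S \<longleftrightarrow> (\<forall>x. (\<forall>e>0. \<exists>y\<in>S. perm_dist x y < e) \<longrightarrow> x \<in> S)"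

end

theory Submission
  imports Defs "HOL-Computational_Algebra.Polynomial"
begin

text \<open>If x represents sLog A, the numbers exp(x_i)^2 are the roots of the characteristic
  polynomial of A^* A, so their sum is trace (A^* A) = |A|^2. Hence, along a sequence in the
  amoeba converging in R^n to x, the corresponding matrices stay bounded and have a convergent
  subsequence. Its limit L satisfies sLog L = x, because the characteristic polynomial of A^* A
  depends continuously on A; L is invertible because 0 is not among the limiting roots, and it
  lies in V(I) because the numerators of regular functions are continuous. So the amoeba is
  closed in R^n, and being invariant under permutation of coordinates it is closed in
  R^n/S_n.\<close>

definition charpoly :: "'a::comm_ring_1^'n^'n \<Rightarrow> 'a poly" where
  "charpoly M = (\<Sum>p | p permutes (UNIV::'n set). of_int (sign p) *
      (\<Prod>i\<in>UNIV. [:- M$i$p i, of_bool (p i = i):]))"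

lemma poly_charpoly: "poly (charpoly M) t = det (mat t - M)"
  unfolding det_def charpoly_def poly_sum poly_mult poly_prod poly_of_int
  by (intro sum.cong refl arg_cong2[where f = "(*)"] prod.cong) (simp add: mat_def)

lemma coeff_prod_linear_card:
  fixes a :: "'i \<Rightarrow> 'a::comm_ring_1"
  assumes "finite S"
  shows "coeff (\<Prod>i\<in>S. [:a i, 1:]) (card S) = 1"
  using assms
proof (induction S rule: finite_induct)
  case empty
  then show ?case by simp
next
  case (insert x F)
  have "degree (\<Prod>i\<in>F. [:a i, 1:]) \<le> card F"
    using degree_prod_sum_le[OF insert.hyps(1), of "\<lambda>i. [:a i, 1:]"] by (simp add: o_def)
  then have "coeff (\<Prod>i\<in>F. [:a i, 1:]) (Suc (card F)) = 0"
    by (simp add: coeff_eq_0)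
  with insert show ?case by simp
qed

lemma coeff_prod_linear_card_pred:
  fixes a :: "'i \<Rightarrow> 'a::comm_ring_1"
  assumes "finite S" "S \<noteq> {}"
  shows "coeff (\<Prod>i\<in>S. [:a i, 1:]) (card S - 1) = (\<Sum>i\<in>S. a i)"
  using assms
proof (induction S rule: finite_ne_induct)
  case (singleton x)
  then show ?case by simp
next
  case (insert x F)
  obtain m where m: "card F = Suc m"
    using insert.hyps(1,2) by (cases "card F") auto
  have "coeff (\<Prod>i\<in>insert x F. [:a i, 1:]) (card F)
      = a x * coeff (\<Prod>i\<in>F. [:a i, 1:]) (card F) + coeff (\<Prod>i\<in>F. [:a i, 1:]) m"
    using insert.hyps m by simp
  with insert coeff_prod_linear_card[OF insert.hyps(1), of a] m show ?case by simp
qed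

lemma card_fixpoints_le:
  assumes "p permutes (UNIV::'n::finite set)" "p \<noteq> id"
  shows "card {i. p i = i} + 2 \<le> CARD('n)"
proof -
  obtain i where i: "p i \<noteq> i" using assms(2) by (metis eq_id_iff)
  then have "p (p i) \<noteq> p i" using permutes_inj[OF assms(1)] by (metis injD)
  with i have "{i. p i = i} \<subseteq> UNIV - {i, p i}" by auto
  then have "card {i. p i = i} \<le> card (UNIV - {i, p i})" by (intro card_mono) auto
  also have "\<dots> = CARD('n) - 2" using i by (simp add: card_Diff_subset)
  moreover have "card {i, p i} \<le> CARD('n)" by (rule card_mono) auto
  ultimately show ?thesis using i by simp
qed

lemma coeff_charpoly_card_pred:
  fixes M :: "'a::comm_ring_1^'n^'n"
  shows "coeff (charpoly M) (CARD('n) - 1) = - trace M"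
proof -
  let ?term = "\<lambda>p. of_int (sign p) * (\<Prod>i\<in>UNIV. [:- M$i$p i, of_bool (p i = i):])"
  have vanish: "coeff (?term p) (CARD('n) - 1) = 0" if "p permutes UNIV" "p \<noteq> id" for p
  proof -
    have "degree (\<Prod>i\<in>UNIV. [:- M$i$p i, of_bool (p i = i):])
        \<le> (\<Sum>i\<in>UNIV. degree [:- M$i$p i, of_bool (p i = i):])"
      using degree_prod_sum_le[OF finite_class.finite_UNIV, of "\<lambda>i. [:- M$i$p i, of_bool (p i = i):]"]
      by (simp only: o_def)
    also have "\<dots> \<le> (\<Sum>i\<in>UNIV. of_bool (p i = i))"
      by (intro sum_mono) auto
    also have "\<dots> = card {i. p i = i}" by simp
    finally show ?thesis
      using card_fixpoints_le[OF that]
      by (simp add: coeff_eq_0 of_int_poly del: pCons_eq_0_iff)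
  qed
  have "coeff (charpoly M) (CARD('n) - 1) = (\<Sum>p | p permutes UNIV. coeff (?term p) (CARD('n) - 1))"
    unfolding charpoly_def coeff_sum ..
  also have "\<dots> = coeff (?term id) (CARD('n) - 1)"
    using vanish by (subst sum.remove[of _ id]) (auto simp: permutes_id finite_permutations)
  also have "\<dots> = (\<Sum>i\<in>UNIV. - M$i$i)"
    using coeff_prod_linear_card_pred[of "UNIV::'n set" "\<lambda>i. - M$i$i"] by simp
  finally show ?thesis by (simp add: trace_def sum_negf)
qed

lemma trace_eq_sum_if_det_eq_prod:
  fixes M :: "'a::{idom,ring_char_0}^'n^'n" and c :: "'n \<Rightarrow> 'a"
  assumes "\<And>t. det (mat t - M) = (\<Prod>i\<in>UNIV. t - c i)"
  shows "trace M = (\<Sum>i\<in>UNIV. c i)"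
proof -
  have "charpoly M = (\<Prod>i\<in>UNIV. [:- c i, 1:])"
    using assms by (simp add: poly_eq_poly_eq_iff[symmetric] poly_charpoly poly_prod fun_eq_iff)
  then have "coeff (charpoly M) (CARD('n) - 1) = (\<Sum>i\<in>UNIV. - c i)"
    using coeff_prod_linear_card_pred[of "UNIV::'n set" "\<lambda>i. - c i"] by simp
  then show ?thesis using coeff_charpoly_card_pred[of M] by (simp add: sum_negf)
qed

lemma trace_conj_transpose_mult: "trace (conj_transpose A ** A) = complex_of_real ((norm A)\<^sup>2)"
proof -
  have "trace (conj_transpose A ** A) = (\<Sum>j\<in>UNIV. \<Sum>i\<in>UNIV. cnj (A$i$j) * A$i$j)"
    by (simp add: trace_def conj_transpose_def matrix_matrix_mult_def)
  also have "\<dots> = (\<Sum>j\<in>UNIV. \<Sum>i\<in>UNIV. complex_of_real ((norm (A$i$j))\<^sup>2))"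
    by (intro sum.cong refl) (subst complex_norm_square, simp add: mult.commute)
  also have "\<dots> = complex_of_real (\<Sum>i\<in>UNIV. (norm (A$i))\<^sup>2)"
    by (subst sum.swap) (simp add: norm_vec_def L2_set_def sum_nonneg)
  also have "\<dots> = complex_of_real ((norm A)\<^sup>2)"
    by (simp add: norm_vec_def L2_set_def sum_nonneg)
  finally show ?thesis .
qed

lemma norm_sq_if_sLog_rep:
  assumes "sLog_rep A x"
  shows "(norm A)\<^sup>2 = (\<Sum>i\<in>UNIV. exp (x$i) ^ 2)"
proof -
  have "trace (conj_transpose A ** A) = (\<Sum>i\<in>UNIV. complex_of_real (exp (x$i) ^ 2))"
    by (intro trace_eq_sum_if_det_eq_prod) (use assms in \<open>simp add: sLog_rep_def\<close>)
  then show ?thesis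
    unfolding trace_conj_transpose_mult by (metis of_real_eq_iff of_real_sum)
qed

lemma norm_le_if_sLog_rep:
  fixes x :: "real^'n"
  assumes "sLog_rep A x"
  shows "norm A \<le> sqrt CARD('n) * exp (norm x)"
proof -
  have le: "exp (x$i) ^ 2 \<le> exp (norm x) ^ 2" for i
    using component_le_norm_cart[of x i] by (intro power_mono) auto
  have "(norm A)\<^sup>2 \<le> (\<Sum>i\<in>(UNIV::'n set). exp (norm x) ^ 2)"
    unfolding norm_sq_if_sLog_rep[OF assms] by (intro sum_mono le)
  then have "norm A \<le> sqrt (CARD('n) * exp (norm x) ^ 2)"
    by (intro real_le_rsqrt) simp
  then show ?thesis
    by (simp add: real_sqrt_mult)
qed

lemma det_neg: "det (- A) = (- 1) ^ CARD('n) * det (A::'a::comm_ring_1^'n^'n)"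
proof -
  have "- A = (\<chi> i. (- 1) *s A$i)"
    by (simp add: vec_eq_iff)
  then show ?thesis
    using det_rows_mul[of "\<lambda>i. - 1" "\<lambda>i. A$i"] by simp
qed

lemma det_nonzero_if_sLog_rep:
  assumes "sLog_rep A x"
  shows "det A \<noteq> 0"
proof
  assume "det A = 0"
  then have "det (mat 0 - conj_transpose A ** A) = 0"
    by (simp add: det_neg det_mul)
  moreover have "(\<Prod>i\<in>UNIV. 0 - complex_of_real (exp (x $ i) ^ 2)) \<noteq> 0"
    by simp
  ultimately show False
    using assms unfolding sLog_rep_def by metis
qed

lemma isCont_poly_fun: "p \<in> poly_fun \<Longrightarrow> isCont p A"
  by (induction rule: poly_fun.induct) (auto intro!: continuous_intros)

lemma sLog_rep_limit:
  assumes "A \<longlonglongrightarrow> L" "x \<longlonglongrightarrow> y" "\<And>k. sLog_rep (A k) (x k)"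
  shows "sLog_rep L y"
  unfolding sLog_rep_def
proof
  fix t :: complex
  have "(\<lambda>k. det (mat t - conj_transpose (A k) ** A k)) \<longlonglongrightarrow> det (mat t - conj_transpose L ** L)"
    unfolding det_def
    by (intro tendsto_intros)
       (simp add: conj_transpose_def matrix_matrix_mult_def, intro tendsto_intros assms(1))
  moreover have "(\<lambda>k. \<Prod>i\<in>UNIV. t - complex_of_real (exp (x k $ i) ^ 2))
      \<longlonglongrightarrow> (\<Prod>i\<in>UNIV. t - complex_of_real (exp (y $ i) ^ 2))"
    by (intro tendsto_intros assms(2))
  ultimately show "det (mat t - conj_transpose L ** L) = (\<Prod>i\<in>UNIV. t - complex_of_real (exp (y $ i) ^ 2))"
    using assms(3) by (simp add: sLog_rep_def LIMSEQ_unique)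
qed

lemma zero_set_GL_limit:
  assumes "\<forall>f\<in>I. regular_fun f" "\<And>k. A k \<in> zero_set_GL I" "A \<longlonglongrightarrow> L" "det L \<noteq> 0"
  shows "L \<in> zero_set_GL I"
  unfolding zero_set_GL_def
proof (intro CollectI conjI ballI assms(4))
  fix f assume "f \<in> I"
  then obtain p m where p: "p \<in> poly_fun" and f: "f = (\<lambda>A. if det A = 0 then 0 else p A / det A ^ m)"
    using assms(1) unfolding regular_fun_def by blast
  have "p (A k) = 0" for k
    using assms(2)[of k] \<open>f \<in> I\<close> f unfolding zero_set_GL_def by (auto split: if_splits)
  moreover have "(\<lambda>k. p (A k)) \<longlonglongrightarrow> p L"
    using isCont_poly_fun[OF p] assms(3) by (rule isCont_tendsto_compose)
  ultimately have "p L = 0"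
    by (simp add: LIMSEQ_const_iff)
  then show "f L = 0" by (simp add: f)
qed

lemma closed_matrix_amoeba:
  fixes I :: "((complex^'n^'n) \<Rightarrow> complex) set"
  assumes "\<forall>f\<in>I. regular_fun f"
  shows "closed (matrix_amoeba I)"
  unfolding closed_sequential_limits
proof (intro allI impI, elim conjE)
  fix X x assume "\<forall>k. X k \<in> matrix_amoeba I" and "X \<longlonglongrightarrow> x"
  then have "\<forall>k. \<exists>A. A \<in> zero_set_GL I \<and> sLog_rep A (X k)"
    unfolding matrix_amoeba_def by blast
  then obtain A where A: "\<And>k. A k \<in> zero_set_GL I" "\<And>k. sLog_rep (A k) (X k)"
    by metis
  obtain B where B: "\<And>k. norm (X k) \<le> B"
    using convergent_imp_Bseq[OF convergentI[OF \<open>X \<longlonglongrightarrow> x\<close>]] unfolding Bseq_def by blast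
  have "norm (A k) \<le> sqrt CARD('n) * exp B" for k
  proof -
    have "norm (A k) \<le> sqrt CARD('n) * exp (norm (X k))"
      using A(2) by (rule norm_le_if_sLog_rep)
    also have "\<dots> \<le> sqrt CARD('n) * exp B"
      using B[of k] by (intro mult_left_mono) auto
    finally show ?thesis .
  qed
  then have "bounded (range A)" unfolding bounded_iff by blast
  then obtain r L where r: "strict_mono r" and lim_A: "(A \<circ> r) \<longlonglongrightarrow> L"
    using bounded_imp_convergent_subsequence by blast
  have lim_X: "(X \<circ> r) \<longlonglongrightarrow> x"
    using LIMSEQ_subseq_LIMSEQ[OF \<open>X \<longlonglongrightarrow> x\<close> r] .
  have "sLog_rep L x"
    by (rule sLog_rep_limit[OF lim_A lim_X]) (simp add: A(2))
  moreover have "L \<in> zero_set_GL I"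
    by (rule zero_set_GL_limit[OF assms _ lim_A det_nonzero_if_sLog_rep[OF \<open>sLog_rep L x\<close>]])
       (simp add: A(1))
  ultimately show "x \<in> matrix_amoeba I"
    unfolding matrix_amoeba_def by blast
qed

lemma sLog_rep_permute:
  assumes "\<sigma> permutes UNIV" "sLog_rep A x"
  shows "sLog_rep A (\<chi> i. x $ \<sigma> i)"
  using assms(2) prod.permute[OF assms(1), of "\<lambda>i. t - complex_of_real (exp (x $ i) ^ 2)" for t]
  by (simp add: sLog_rep_def o_def)

lemma matrix_amoeba_permute:
  assumes "\<sigma> permutes UNIV" "x \<in> matrix_amoeba I"
  shows "(\<chi> i. x $ \<sigma> i) \<in> matrix_amoeba I"
  using assms sLog_rep_permute unfolding matrix_amoeba_def by blast

lemma norm_permute: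
  fixes v :: "'a::real_normed_vector^'n"
  assumes "\<sigma> permutes UNIV"
  shows "norm (\<chi> i. v $ \<sigma> i) = norm v"
  using sum.permute[OF assms, of "\<lambda>i. (norm (v $ i))\<^sup>2"]
  by (simp add: norm_vec_def L2_set_def o_def)

lemma perm_dist_lessE:
  assumes "perm_dist x y < e"
  obtains \<sigma> where "\<sigma> permutes (UNIV::'n::finite set)" "norm ((\<chi> i. x $ \<sigma> i) - y) < e"
proof -
  have "{norm ((\<chi> i. x $ \<sigma> i) - y) | \<sigma>. \<sigma> permutes (UNIV::'n set)}
      = (\<lambda>\<sigma>. norm ((\<chi> i. x $ \<sigma> i) - y)) ` {\<sigma>. \<sigma> permutes UNIV}"
    by auto
  moreover have "finite {\<sigma>. \<sigma> permutes (UNIV::'n set)}"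
    by (simp add: finite_permutations)
  moreover have "{\<sigma>. \<sigma> permutes (UNIV::'n set)} \<noteq> {}"
    using permutes_id by blast
  ultimately show ?thesis
    using assms that unfolding perm_dist_def by (auto simp: Min_less_iff)
qed

lemma closed_quot_if_closed_permute_invariant:
  fixes S :: "(real^'n) set"
  assumes "closed S" "\<And>\<sigma> y. \<sigma> permutes UNIV \<Longrightarrow> y \<in> S \<Longrightarrow> (\<chi> i. y $ \<sigma> i) \<in> S"
  shows "closed_quot S"
  unfolding closed_quot_def
proof (intro allI impI)
  fix x assume near: "\<forall>e>0. \<exists>y\<in>S. perm_dist x y < e"
  have "\<exists>z\<in>S. dist z x < e" if e: "e > 0" for e
  proof -
    obtain y where "y \<in> S" "perm_dist x y < e"
      using near e by blast
    then obtain \<sigma> where \<sigma>: "\<sigma> permutes UNIV" "norm ((\<chi> i. x $ \<sigma> i) - y) < e"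
      using perm_dist_lessE by blast
    let ?z = "\<chi> i. y $ inv \<sigma> i"
    have "?z \<in> S"
      using assms(2)[OF permutes_inv[OF \<sigma>(1)] \<open>y \<in> S\<close>] .
    have "dist ?z x = norm (x - ?z)"
      by (simp add: dist_norm norm_minus_commute)
    also have "x - ?z = (\<chi> i. ((\<chi> j. x $ \<sigma> j) - y) $ inv \<sigma> i)"
      using permutes_inverses(1)[OF \<sigma>(1)] by (simp add: vec_eq_iff)
    also have "norm \<dots> = norm ((\<chi> i. x $ \<sigma> i) - y)"
      by (rule norm_permute[OF permutes_inv[OF \<sigma>(1)]])
    finally have "dist ?z x = norm ((\<chi> i. x $ \<sigma> i) - y)" .
    with \<open>?z \<in> S\<close> \<sigma>(2) show ?thesis by metis
  qed
  then show "x \<in> S"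
    using closed_approachable[OF assms(1)] by blast
qed

theorem mainTheorem3:
  fixes I :: "((complex^'n^'n) \<Rightarrow> complex) set"
  assumes "is_ideal_GL I"
  shows "closed_quot (matrix_amoeba I)"
proof (rule closed_quot_if_closed_permute_invariant)
  show "closed (matrix_amoeba I)"
    using assms unfolding is_ideal_GL_def by (intro closed_matrix_amoeba) blast
qed (rule matrix_amoeba_permute)

end
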